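(* Let $\mathcal F$ be a family of graphs, every member of which is connected, and let $v$ be the smallest number of vertices of a member of $\mathcal F$. Then for every positive integer $n$ and every nonnegative integer $k$, $$\left(1-\frac{2kv}{n}\right)\mathrm{ex}(n,\mathcal F)\le \mathrm{exa}_k(n,\mathcal F)\le \mathrm{ex}(n,\mathcal F)+k=\mathrm{exa}_0(n,\mathcal F)+k.$$
   Context: For graphs $H$ and $F$, $\mathcal N(H,F)$ is the number of subgraphs of $H$ isomorphic to $F$. For a family $\mathcal F$ of graphs and a nonnegative integer $k$, $\mathrm{exa}_k(n,\mathcal F)$ is the largest number of edges of a simple graph $H$ on $n$ vertices with $\sum_{F\in\mathcal F}\mathcal N(H,F)=k$ (defined whenever such an $H$ exists). $\mathrm{ex}(n,\mathcal F)=\mathrm{exa}_0(n,\mathcal F)$ is the largest number of edges of a graph on $n$ vertices containing no subgraph isomorphic to a member of $\mathcal F$. *)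

theory Defs
  imports Complex_Main
begin

type_synonym 'a graph = "'a set \<times> 'a set set"

definition is_graph :: "'a graph \<Rightarrow> bool" where
  "is_graph G \<longleftrightarrow> finite (fst G) \<and>
     (\<forall>e\<in>snd G. \<exists>a b. a \<in> fst G \<and> b \<in> fst G \<and> a \<noteq> b \<and> e = {a, b})"

definition adj_rel :: "'a graph \<Rightarrow> ('a \<times> 'a) set" where
  "adj_rel G = {(x, y). {x, y} \<in> snd G}"

definition connected_graph :: "'a graph \<Rightarrow> bool" where
  "connected_graph G \<longleftrightarrow> is_graph G \<and> fst G \<noteq> {} \<and>
     (\<forall>x\<in>fst G. \<forall>y\<in>fst G. (x, y) \<in> (adj_rel G)\<^sup>*)"

definition graph_iso :: "'a graph \<Rightarrow> 'b graph \<Rightarrow> bool" where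
  "graph_iso G H \<longleftrightarrow> (\<exists>f. bij_betw f (fst G) (fst H) \<and>
     (\<forall>x\<in>fst G. \<forall>y\<in>fst G. {x, y} \<in> snd G \<longleftrightarrow> {f x, f y} \<in> snd H))"

definition subgraphs :: "'a graph \<Rightarrow> 'a graph set" where
  "subgraphs H = {S. fst S \<subseteq> fst H \<and> snd S \<subseteq> snd H \<and> is_graph S}"

text \<open>Number of subgraphs of H isomorphic to a member of the family \<F>
  (= sum over \<F> of N(H,F) for a family of pairwise non-isomorphic graphs).\<close>
definition fam_count :: "'b graph set \<Rightarrow> 'a graph \<Rightarrow> nat" where
  "fam_count \<F> H = card {S \<in> subgraphs H. \<exists>F\<in>\<F>. graph_iso F S}"

definition graphs_on :: "nat \<Rightarrow> nat graph set" where
  "graphs_on n = {G. fst G = {0..<n} \<and> is_graph G}"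

definition exa :: "nat \<Rightarrow> nat \<Rightarrow> 'b graph set \<Rightarrow> nat" where
  "exa k n \<F> = Max {card (snd H) | H. H \<in> graphs_on n \<and> fam_count \<F> H = k}"

definition ex :: "nat \<Rightarrow> 'b graph set \<Rightarrow> nat" where
  "ex n \<F> = Max {card (snd H) | H. H \<in> graphs_on n \<and> fam_count \<F> H = 0}"

definition min_order :: "'b graph set \<Rightarrow> nat" where
  "min_order \<F> = (LEAST m. \<exists>F\<in>\<F>. card (fst F) = m)"

end

theory Submission
  imports Defs
begin

text \<open>
  Upper bound: delete one edge from each of the k copies in an extremal graph. Every copy has an
  edge, since a connected member without edges is a single vertex, which the \<F>-free graph on
  n > 0 vertices would contain.

  Lower bound: in an extremal \<F>-free graph G choose k v vertices of least total degree, so that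
  at most 2 k v ex(n, \<F>) / n edges meet them. Delete these edges and plant k disjoint copies of a
  member F0 with v vertices and as few edges as possible on the chosen vertices. A copy of a
  member in the new graph is connected, so it either avoids the chosen vertices, which is
  impossible as G is \<F>-free, or lies inside one planted copy; minimality of F0 then forces it
  to be that planted copy. Hence the new graph has exactly k copies.
\<close>

lemma is_graph_edgeD:
  "is_graph G \<Longrightarrow> {a, b} \<in> snd G \<Longrightarrow> a \<in> fst G \<and> b \<in> fst G \<and> a \<noteq> b"
  unfolding is_graph_def by (metis doubleton_eq_iff)

lemma is_graph_edge_subset: "is_graph G \<Longrightarrow> e \<in> snd G \<Longrightarrow> e \<subseteq> fst G"
  unfolding is_graph_def by force

lemma is_graph_card_edge: "is_graph G \<Longrightarrow> e \<in> snd G \<Longrightarrow> card e = 2"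
  unfolding is_graph_def by force

lemma is_graph_finite_vertices: "is_graph G \<Longrightarrow> finite (fst G)"
  unfolding is_graph_def by simp

lemma is_graph_finite_edges: "is_graph G \<Longrightarrow> finite (snd G)"
proof -
  assume "is_graph G"
  then have "snd G \<subseteq> Pow (fst G)" and "finite (fst G)"
    using is_graph_edge_subset unfolding is_graph_def by blast+
  then show ?thesis by (simp add: finite_subset)
qed

lemma graph_iso_card_vertices: "graph_iso F S \<Longrightarrow> card (fst S) = card (fst F)"
  unfolding graph_iso_def by (metis bij_betw_same_card)

lemma graph_iso_edges_eq_image:
  assumes "is_graph F" "is_graph S" and f: "bij_betw f (fst F) (fst S)"
    and edges: "\<forall>x\<in>fst F. \<forall>y\<in>fst F. {x, y} \<in> snd F \<longleftrightarrow> {f x, f y} \<in> snd S"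
  shows "snd S = (`) f ` snd F"
proof (intro equalityI subsetI)
  fix e assume "e \<in> snd S"
  then obtain x y where "x \<in> fst S" "y \<in> fst S" "e = {x, y}"
    using \<open>is_graph S\<close> unfolding is_graph_def by blast
  moreover obtain a b where "a \<in> fst F" "b \<in> fst F" "x = f a" "y = f b"
    using f \<open>x \<in> fst S\<close> \<open>y \<in> fst S\<close> unfolding bij_betw_def by blast
  ultimately have "{a, b} \<in> snd F" "e = f ` {a, b}" using edges \<open>e \<in> snd S\<close> by auto
  then show "e \<in> (`) f ` snd F" by blast
next
  fix e assume "e \<in> (`) f ` snd F"
  then obtain a b where "a \<in> fst F" "b \<in> fst F" "{a, b} \<in> snd F" "e = {f a, f b}"
    using \<open>is_graph F\<close> unfolding is_graph_def by fastforce
  then show "e \<in> snd S" using edges by blast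
qed

lemma graph_iso_card_edges:
  assumes "is_graph F" "is_graph S" "graph_iso F S"
  shows "card (snd S) = card (snd F)"
proof -
  obtain f where f: "bij_betw f (fst F) (fst S)"
    and edges: "\<forall>x\<in>fst F. \<forall>y\<in>fst F. {x, y} \<in> snd F \<longleftrightarrow> {f x, f y} \<in> snd S"
    using assms(3) unfolding graph_iso_def by blast
  have "inj_on ((`) f) (snd F)"
    using f is_graph_edge_subset[OF assms(1)]
    by (intro inj_onI) (metis bij_betw_def inj_on_image_eq_iff)
  then show ?thesis
    using graph_iso_edges_eq_image[OF assms(1,2) f edges] by (simp add: card_image)
qed

lemma graph_iso_image:
  assumes "is_graph F" "inj_on g (fst F)"
  shows "graph_iso F (g ` fst F, (`) g ` snd F)" "is_graph (g ` fst F, (`) g ` snd F)"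
proof -
  have "{g x, g y} \<in> (`) g ` snd F \<longleftrightarrow> {x, y} \<in> snd F"
    if xy: "x \<in> fst F" "y \<in> fst F" for x y
  proof
    assume "{g x, g y} \<in> (`) g ` snd F"
    then obtain e where "e \<in> snd F" "g ` {x, y} = g ` e" by auto
    moreover have "e \<subseteq> fst F" using is_graph_edge_subset[OF assms(1) \<open>e \<in> snd F\<close>] .
    ultimately show "{x, y} \<in> snd F"
      using xy inj_on_image_eq_iff[OF assms(2)] by (metis empty_subsetI insert_subset)
  next
    assume "{x, y} \<in> snd F"
    then show "{g x, g y} \<in> (`) g ` snd F" using imageI[of "{x, y}" "snd F" "(`) g"] by simp
  qed
  then show "graph_iso F (g ` fst F, (`) g ` snd F)"
    unfolding graph_iso_def using assms(2)
    by (intro exI[of _ g]) (auto simp: bij_betw_def)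
  show "is_graph (g ` fst F, (`) g ` snd F)"
    using assms unfolding is_graph_def by (fastforce dest: inj_onD)
qed

lemma graph_iso_connected:
  assumes "connected_graph F" "graph_iso F S" "is_graph S"
  shows "connected_graph S"
proof -
  obtain f where f: "bij_betw f (fst F) (fst S)"
    and edges: "\<forall>x\<in>fst F. \<forall>y\<in>fst F. {x, y} \<in> snd F \<longleftrightarrow> {f x, f y} \<in> snd S"
    using assms(2) unfolding graph_iso_def by blast
  have "is_graph F" using assms(1) unfolding connected_graph_def by blast
  have walk: "(f a, f b) \<in> (adj_rel S)\<^sup>*" if "(a, b) \<in> (adj_rel F)\<^sup>*" for a b
    using that
  proof (induction rule: rtrancl_induct)
    case (step b c)
    then have "{b, c} \<in> snd F" by (simp add: adj_rel_def)
    then have "{f b, f c} \<in> snd S" using edges is_graph_edgeD[OF \<open>is_graph F\<close>] by blast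
    then show ?case using step.IH by (simp add: adj_rel_def rtrancl.rtrancl_into_rtrancl)
  qed simp
  have "\<forall>x\<in>fst S. \<forall>y\<in>fst S. (x, y) \<in> (adj_rel S)\<^sup>*"
  proof (intro ballI)
    fix x y assume "x \<in> fst S" "y \<in> fst S"
    then obtain a b where "a \<in> fst F" "b \<in> fst F" "x = f a" "y = f b"
      using f unfolding bij_betw_def by blast
    then show "(x, y) \<in> (adj_rel S)\<^sup>*"
      using walk assms(1) unfolding connected_graph_def by blast
  qed
  moreover have "fst S \<noteq> {}"
    using f assms(1) unfolding connected_graph_def bij_betw_def by blast
  ultimately show ?thesis using assms(3) unfolding connected_graph_def by blast
qed

lemma connected_graph_vertices_subset:
  assumes "connected_graph S" and closed: "\<And>x y. {x, y} \<in> snd S \<Longrightarrow> x \<in> A \<Longrightarrow> y \<in> A"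
    and "x \<in> fst S" "x \<in> A"
  shows "fst S \<subseteq> A"
proof
  fix y assume "y \<in> fst S"
  then have "(x, y) \<in> (adj_rel S)\<^sup>*"
    using assms(1,3) unfolding connected_graph_def by blast
  then show "y \<in> A"
    by (induction rule: rtrancl_induct) (use \<open>x \<in> A\<close> closed in \<open>auto simp: adj_rel_def\<close>)
qed

lemma finite_subgraphs: "finite (fst H) \<Longrightarrow> finite (subgraphs H)"
proof -
  assume "finite (fst H)"
  moreover have "subgraphs H \<subseteq> Pow (fst H) \<times> Pow (Pow (fst H))"
    unfolding subgraphs_def using is_graph_edge_subset by fastforce
  ultimately show ?thesis by (meson finite_Pow_iff finite_SigmaI finite_subset)
qed

lemma fam_count_eq_0_iff:
  "finite (fst H) \<Longrightarrow> fam_count \<F> H = 0 \<longleftrightarrow> (\<forall>S\<in>subgraphs H. \<forall>F\<in>\<F>. \<not> graph_iso F S)"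
proof -
  assume "finite (fst H)"
  then have "finite {S \<in> subgraphs H. \<exists>F\<in>\<F>. graph_iso F S}"
    by (auto intro: finite_subset[OF _ finite_subgraphs])
  then show ?thesis unfolding fam_count_def by auto
qed

lemma connected_member_has_edge:
  assumes "connected_graph F" "F \<in> \<F>"
    and "is_graph H" "fst H \<noteq> {}" "fam_count \<F> H = 0"
  shows "snd F \<noteq> {}"
proof
  assume no_edges: "snd F = {}"
  obtain a where a: "a \<in> fst F" using assms(1) unfolding connected_graph_def by blast
  have "x = a" if "x \<in> fst F" for x
  proof -
    have "(a, x) \<in> (adj_rel F)\<^sup>*" using assms(1) a that unfolding connected_graph_def by blast
    then show "x = a" using no_edges by (simp add: adj_rel_def)
  qed
  then have "fst F = {a}" using a by blast
  obtain x where x: "x \<in> fst H" using assms(4) by blast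
  have "graph_iso F ({x}, {})"
    unfolding graph_iso_def using \<open>fst F = {a}\<close> no_edges
    by (intro exI[of _ "\<lambda>_. x"]) (simp add: bij_betw_def)
  moreover have "({x}, {}) \<in> subgraphs H"
    using x by (simp add: subgraphs_def is_graph_def)
  ultimately show False
    using assms(2,5) fam_count_eq_0_iff[OF is_graph_finite_vertices[OF assms(3)]] by blast
qed

lemma delete_edge_from_each_copy:
  assumes "is_graph H" and members: "\<forall>F\<in>\<F>. is_graph F \<and> snd F \<noteq> {}"
  shows "\<exists>H'. fst H' = fst H \<and> is_graph H' \<and> fam_count \<F> H' = 0
    \<and> card (snd H) \<le> card (snd H') + fam_count \<F> H"
proof -
  define copies where "copies = {S \<in> subgraphs H. \<exists>F\<in>\<F>. graph_iso F S}"
  define R where "R = (\<lambda>S. SOME e. e \<in> snd S) ` copies"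
  define H' where "H' = (fst H, snd H - R)"
  have "finite copies"
    using assms(1) unfolding copies_def is_graph_def
    by (auto intro: finite_subset[OF _ finite_subgraphs])
  then have card_R: "card R \<le> fam_count \<F> H"
    unfolding R_def fam_count_def copies_def by (rule card_image_le)
  have some_edge: "(SOME e. e \<in> snd S) \<in> snd S" if copy: "S \<in> copies" for S
  proof -
    obtain F f where "F \<in> \<F>" "bij_betw f (fst F) (fst S)"
      and "\<forall>x\<in>fst F. \<forall>y\<in>fst F. {x, y} \<in> snd F \<longleftrightarrow> {f x, f y} \<in> snd S"
      using copy unfolding copies_def graph_iso_def by blast
    moreover obtain e where "e \<in> snd F" using members \<open>F \<in> \<F>\<close> by blast
    moreover obtain a b where "a \<in> fst F" "b \<in> fst F" "e = {a, b}"
      using members \<open>F \<in> \<F>\<close> \<open>e \<in> snd F\<close> unfolding is_graph_def by force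
    ultimately have "{f a, f b} \<in> snd S" by simp
    then have "snd S \<noteq> {}" by blast
    then show ?thesis by (simp add: some_in_eq)
  qed
  have no_copy: "\<not> graph_iso F S" if S: "S \<in> subgraphs H'" and "F \<in> \<F>" for S F
  proof
    assume "graph_iso F S"
    moreover have "S \<in> subgraphs H" using S unfolding subgraphs_def H'_def by auto
    ultimately have "S \<in> copies" using \<open>F \<in> \<F>\<close> unfolding copies_def by blast
    then have "(SOME e. e \<in> snd S) \<in> snd S \<inter> R"
      using some_edge unfolding R_def by blast
    moreover have "snd S \<inter> R = {}" using S unfolding subgraphs_def H'_def by auto
    ultimately show False by blast
  qed
  have "is_graph H'" using assms(1) unfolding H'_def is_graph_def by auto
  moreover have "fam_count \<F> H' = 0"
    using fam_count_eq_0_iff[OF is_graph_finite_vertices[OF \<open>is_graph H'\<close>]] no_copy by blast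
  moreover have "card (snd H) \<le> card (snd H') + card R"
  proof -
    have "card (snd H) \<le> card ((snd H - R) \<union> R)"
      using is_graph_finite_edges[OF assms(1)] \<open>finite copies\<close>
      by (intro card_mono) (auto simp: R_def)
    also have "\<dots> \<le> card (snd H - R) + card R" by (rule card_Un_le)
    finally show ?thesis by (simp add: H'_def)
  qed
  ultimately show ?thesis using card_R unfolding H'_def by fastforce
qed

lemma handshake:
  assumes "finite V" and E: "\<forall>e\<in>E. e \<subseteq> V \<and> card e = 2"
  shows "(\<Sum>x\<in>V. card {e\<in>E. x \<in> e}) = 2 * card E"
proof -
  have "finite E" using E \<open>finite V\<close> by (meson Pow_iff finite_Pow_iff finite_subset subsetI)
  have "(\<Sum>x\<in>V. card {e\<in>E. x \<in> e}) = (\<Sum>x\<in>V. \<Sum>e\<in>E. if x \<in> e then 1 else 0)"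
    using \<open>finite E\<close> by (simp add: sum.inter_filter[symmetric])
  also have "\<dots> = (\<Sum>e\<in>E. \<Sum>x\<in>V. if x \<in> e then 1 else 0)" by (rule sum.swap)
  also have "\<dots> = (\<Sum>e\<in>E. card {x\<in>V. x \<in> e})"
    using \<open>finite V\<close> by (simp add: sum.inter_filter[symmetric])
  also have "\<dots> = (\<Sum>e\<in>E. 2)"
  proof (rule sum.cong)
    fix e assume "e \<in> E"
    then have "{x\<in>V. x \<in> e} = e" "card e = 2" using E by auto
    then show "card {x\<in>V. x \<in> e} = 2" by simp
  qed simp
  finally show ?thesis by simp
qed

lemma exists_subset_sum_le_average:
  fixes d :: "'a \<Rightarrow> nat"
  assumes "finite V" "m \<le> card V"
  shows "\<exists>X\<subseteq>V. card X = m \<and> card V * sum d X \<le> m * sum d V"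
proof -
  obtain X0 where "X0 \<subseteq> V" "card X0 = m" using obtain_subset_with_card_n[OF assms(2)] by metis
  then obtain X where X: "X \<subseteq> V" "card X = m"
    and X_min: "\<And>Y. Y \<subseteq> V \<Longrightarrow> card Y = m \<Longrightarrow> sum d X \<le> sum d Y"
    using ex_has_least_nat[where P="\<lambda>Y. Y \<subseteq> V \<and> card Y = m" and m="sum d"] by metis
  have "finite X" using X(1) assms(1) finite_subset by blast
  have exchange: "d x \<le> d y" if "x \<in> X" "y \<in> V - X" for x y
  proof -
    have "card (insert y (X - {x})) = m"
      using X that \<open>finite X\<close> by (simp add: card_Suc_Diff1 del: card_Diff_insert)
    then have "sum d X \<le> sum d (insert y (X - {x}))"
      using X(1) that by (intro X_min) auto
    then show ?thesis using that \<open>finite X\<close> by (simp add: sum.remove)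
  qed
  have "card (V - X) * sum d X = (\<Sum>y\<in>V - X. \<Sum>x\<in>X. d x)" by simp
  also have "\<dots> \<le> (\<Sum>y\<in>V - X. \<Sum>x\<in>X. d y)" using exchange by (intro sum_mono) auto
  also have "\<dots> = m * sum d (V - X)" using X(2) by (simp add: sum_distrib_left)
  finally have "card (V - X) * sum d X \<le> m * sum d (V - X)" .
  moreover have "card V = card (V - X) + m"
    using X \<open>finite X\<close> assms(1) by (metis card_Diff_subset card_mono le_add_diff_inverse2)
  moreover have "sum d V = sum d (V - X) + sum d X"
    using X(1) assms(1) by (metis sum.subset_diff)
  ultimately have "card V * sum d X \<le> m * sum d V" by (simp add: algebra_simps)
  then show ?thesis using X by blast
qed

lemma exists_subset_few_incident_edges:
  assumes "finite V" and E: "\<forall>e\<in>E. e \<subseteq> V \<and> card e = 2" and "m \<le> card V"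
  shows "\<exists>X\<subseteq>V. card X = m \<and> card V * card {e\<in>E. e \<inter> X \<noteq> {}} \<le> m * (2 * card E)"
proof -
  define d where "d x = card {e\<in>E. x \<in> e}" for x
  obtain X where X: "X \<subseteq> V" "card X = m" and avg: "card V * sum d X \<le> m * sum d V"
    using exists_subset_sum_le_average[OF assms(1,3)] by blast
  have "{e\<in>E. e \<inter> X \<noteq> {}} = (\<Union>x\<in>X. {e\<in>E. x \<in> e})" by auto
  then have "card {e\<in>E. e \<inter> X \<noteq> {}} \<le> sum d X"
    using card_UN_le[of X "\<lambda>x. {e\<in>E. x \<in> e}"] X(1) assms(1)
    by (simp add: d_def finite_subset)
  then have "card V * card {e\<in>E. e \<inter> X \<noteq> {}} \<le> card V * sum d X" by simp
  also have "\<dots> \<le> m * (2 * card E)"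
    using avg handshake[OF assms(1) E] by (simp add: d_def)
  finally show ?thesis using X by blast
qed

lemma finite_graphs_on: "finite (graphs_on n)"
proof (rule finite_subset)
  show "graphs_on n \<subseteq> {{0..<n}} \<times> Pow (Pow {0..<n})"
    unfolding graphs_on_def using is_graph_edge_subset by fastforce
qed simp

lemma finite_edge_counts:
  "finite {card (snd H) | H. H \<in> graphs_on n \<and> fam_count \<F> H = k}"
  by (rule finite_subset[OF _ finite_imageI[OF finite_graphs_on]]) auto

lemma card_edges_le_exa:
  "H \<in> graphs_on n \<Longrightarrow> fam_count \<F> H = k \<Longrightarrow> card (snd H) \<le> exa k n \<F>"
  unfolding exa_def by (rule Max_ge[OF finite_edge_counts]) blast

lemma exa_attained:
  assumes "\<exists>H\<in>graphs_on n. fam_count \<F> H = k"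
  obtains H where "H \<in> graphs_on n" "fam_count \<F> H = k" "card (snd H) = exa k n \<F>"
proof -
  have "exa k n \<F> \<in> {card (snd H) | H. H \<in> graphs_on n \<and> fam_count \<F> H = k}"
    unfolding exa_def using assms by (intro Max_in[OF finite_edge_counts]) auto
  then show ?thesis using that by auto
qed

lemma ex_eq_exa_0: "ex n \<F> = exa 0 n \<F>"
  by (simp add: ex_def exa_def)

lemma min_order_le: "F \<in> \<F> \<Longrightarrow> min_order \<F> \<le> card (fst F)"
  unfolding min_order_def by (rule Least_le[where P="\<lambda>m. \<exists>F\<in>\<F>. card (fst F) = m"]) auto

lemma min_order_attained: "\<F> \<noteq> {} \<Longrightarrow> \<exists>F\<in>\<F>. card (fst F) = min_order \<F>"
  unfolding min_order_def by (rule LeastI_ex[where P="\<lambda>m. \<exists>F\<in>\<F>. card (fst F) = m"]) auto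

text \<open>h (i, a) is the vertex playing the role of a in the i-th planted copy of F0.\<close>
locale planting =
  fixes G :: "'a graph" and F0 :: "'b graph" and k :: nat and h :: "nat \<times> 'b \<Rightarrow> 'a"
  assumes graph_G: "is_graph G" and graph_F0: "is_graph F0"
    and inj_h: "inj_on h ({..<k} \<times> fst F0)"
    and h_into: "h ` ({..<k} \<times> fst F0) \<subseteq> fst G"
begin

definition covered :: "'a set" where
  "covered = h ` ({..<k} \<times> fst F0)"

definition block :: "nat \<Rightarrow> 'a graph" where
  "block i = ((\<lambda>a. h (i, a)) ` fst F0, (`) (\<lambda>a. h (i, a)) ` snd F0)"

definition planted :: "'a graph" where
  "planted = (fst G, {e \<in> snd G. e \<inter> covered = {}} \<union> (\<Union>i<k. snd (block i)))"

lemma inj_on_block_map: "i < k \<Longrightarrow> inj_on (\<lambda>a. h (i, a)) (fst F0)"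
  using inj_h by (auto intro!: inj_onI dest: inj_onD)

lemma block_iso: "i < k \<Longrightarrow> graph_iso F0 (block i)"
  and is_graph_block: "i < k \<Longrightarrow> is_graph (block i)"
  using graph_iso_image[OF graph_F0 inj_on_block_map] unfolding block_def by auto

lemma covered_eq: "covered = (\<Union>i<k. fst (block i))"
  unfolding block_def covered_def by auto

lemma in_covered_iff: "x \<in> covered \<longleftrightarrow> (\<exists>i<k. x \<in> fst (block i))"
  using covered_eq by auto

lemma block_subset_covered: "i < k \<Longrightarrow> fst (block i) \<subseteq> covered"
  using covered_eq by auto

lemma covered_subset: "covered \<subseteq> fst G"
  using h_into unfolding covered_def .

lemma block_disjoint:
  "i < k \<Longrightarrow> j < k \<Longrightarrow> x \<in> fst (block i) \<Longrightarrow> x \<in> fst (block j) \<Longrightarrow> i = j"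
  unfolding block_def using inj_h by (auto dest: inj_onD)

lemma block_edge_subset: "i < k \<Longrightarrow> e \<in> snd (block i) \<Longrightarrow> e \<subseteq> fst (block i)"
  by (rule is_graph_edge_subset[OF is_graph_block])

lemma is_graph_planted: "is_graph planted"
  unfolding is_graph_def
proof (intro conjI ballI)
  show "finite (fst planted)" using graph_G unfolding planted_def is_graph_def by simp
next
  fix e assume "e \<in> snd planted"
  then consider "e \<in> snd G" | i where "i < k" "e \<in> snd (block i)"
    unfolding planted_def by auto
  then show "\<exists>a b. a \<in> fst planted \<and> b \<in> fst planted \<and> a \<noteq> b \<and> e = {a, b}"
  proof cases
    case 1
    then show ?thesis using graph_G unfolding is_graph_def planted_def by simp
  next
    case 2
    then have "fst (block i) \<subseteq> fst planted"
      using covered_eq covered_subset unfolding planted_def by auto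
    moreover obtain a b where "a \<in> fst (block i)" "b \<in> fst (block i)" "a \<noteq> b" "e = {a, b}"
      using is_graph_block[OF 2(1)] 2(2) unfolding is_graph_def by force
    ultimately show ?thesis by auto
  qed
qed

lemma block_subgraph: "i < k \<Longrightarrow> block i \<in> subgraphs planted"
  using covered_eq covered_subset is_graph_block
  unfolding subgraphs_def planted_def by auto

lemma inj_on_block:
  assumes "fst F0 \<noteq> {}"
  shows "inj_on block {..<k}"
proof (rule inj_onI)
  fix i j assume "i \<in> {..<k}" "j \<in> {..<k}" "block i = block j"
  moreover obtain a where "a \<in> fst F0" using assms by blast
  ultimately have "h (i, a) \<in> fst (block i)" "h (i, a) \<in> fst (block j)"
    unfolding block_def by auto
  then show "i = j" using block_disjoint \<open>i \<in> {..<k}\<close> \<open>j \<in> {..<k}\<close> by blast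
qed

lemma card_edges_planted:
  "card (snd G) \<le> card (snd planted) + card {e \<in> snd G. e \<inter> covered \<noteq> {}}"
proof -
  have "card (snd G) \<le> card {e \<in> snd G. e \<inter> covered = {}} + card {e \<in> snd G. e \<inter> covered \<noteq> {}}"
    using card_Un_le[of "{e \<in> snd G. e \<inter> covered = {}}" "{e \<in> snd G. e \<inter> covered \<noteq> {}}"]
    by (simp add: Un_def conj_disj_distribL[symmetric])
  moreover have "card {e \<in> snd G. e \<inter> covered = {}} \<le> card (snd planted)"
    using is_graph_finite_edges[OF is_graph_planted] by (intro card_mono) (auto simp: planted_def)
  ultimately show ?thesis by linarith
qed

lemma connected_subgraph_planted:
  assumes S: "S \<in> subgraphs planted" and "connected_graph S"
  shows "S \<in> subgraphs G \<or> (\<exists>i<k. fst S \<subseteq> fst (block i) \<and> snd S \<subseteq> snd (block i))"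
proof -
  have "is_graph S" using S unfolding subgraphs_def by simp
  have edge_S: "e \<subseteq> fst S" "e \<noteq> {}" "e \<in> snd planted" if "e \<in> snd S" for e
    using is_graph_edge_subset[OF \<open>is_graph S\<close> that] that S \<open>is_graph S\<close>
    unfolding subgraphs_def is_graph_def by auto
  have edge_in_block: "\<exists>j<k. e \<in> snd (block j)" if "e \<in> snd S" "y \<in> e" "y \<in> covered" for e y
    using edge_S(3)[OF that(1)] that(2,3) unfolding planted_def by auto
  show ?thesis
  proof (cases "fst S \<inter> covered = {}")
    case True
    have "e \<in> snd G" if "e \<in> snd S" for e
    proof -
      have "e \<notin> snd (block j)" if "j < k" for j
      proof
        assume "e \<in> snd (block j)"
        then have "e \<subseteq> covered"
          using block_edge_subset[OF that] block_subset_covered[OF that] by auto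
        then show False using edge_S[OF \<open>e \<in> snd S\<close>] True by auto
      qed
      then show ?thesis using edge_S(3)[OF that] unfolding planted_def by auto
    qed
    then have "S \<in> subgraphs G" using S unfolding subgraphs_def planted_def by auto
    then show ?thesis ..
  next
    case False
    then obtain x i where x: "x \<in> fst S" "i < k" "x \<in> fst (block i)"
      using in_covered_iff by auto
    have same_block: "z \<in> fst (block i)"
      if e: "e \<in> snd S" "y \<in> e" "y \<in> fst (block i)" "z \<in> e" for e y z
    proof -
      obtain j where "j < k" "e \<in> snd (block j)"
        using edge_in_block[OF e(1,2)] block_subset_covered[OF x(2)] e(3) by auto
      then have "e \<subseteq> fst (block j)" by (rule block_edge_subset)
      then have "j = i" using block_disjoint[OF \<open>j < k\<close> x(2)] e(2,3) by auto
      then show ?thesis using \<open>e \<subseteq> fst (block j)\<close> e(4) by auto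
    qed
    have "fst S \<subseteq> fst (block i)"
      using \<open>connected_graph S\<close> _ x(1,3)
    proof (rule connected_graph_vertices_subset)
      fix y z assume "{y, z} \<in> snd S" "y \<in> fst (block i)"
      then show "z \<in> fst (block i)" using same_block by blast
    qed
    moreover have "snd S \<subseteq> snd (block i)"
    proof
      fix e assume "e \<in> snd S"
      then obtain y where "y \<in> e" using edge_S(2) by auto
      then have "y \<in> fst (block i)" using edge_S(1)[OF \<open>e \<in> snd S\<close>] \<open>fst S \<subseteq> fst (block i)\<close> by auto
      then obtain j where "j < k" "e \<in> snd (block j)"
        using edge_in_block[OF \<open>e \<in> snd S\<close> \<open>y \<in> e\<close>] block_subset_covered[OF x(2)] by auto
      moreover have "y \<in> fst (block j)" using block_edge_subset calculation \<open>y \<in> e\<close> by auto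
      ultimately show "e \<in> snd (block i)"
        using block_disjoint[OF _ x(2) _ \<open>y \<in> fst (block i)\<close>] by auto
    qed
    ultimately show ?thesis using x(2) by blast
  qed
qed

lemma fam_count_planted:
  assumes connected: "\<forall>F\<in>\<F>. connected_graph F" and "F0 \<in> \<F>"
    and least_order: "\<forall>F\<in>\<F>. card (fst F0) \<le> card (fst F)"
    and least_size: "\<forall>F\<in>\<F>. card (fst F) = card (fst F0) \<longrightarrow> card (snd F0) \<le> card (snd F)"
    and free: "fam_count \<F> G = 0"
  shows "fam_count \<F> planted = k"
proof -
  have "{S \<in> subgraphs planted. \<exists>F\<in>\<F>. graph_iso F S} = block ` {..<k}"
  proof (intro equalityI subsetI)
    fix S assume "S \<in> {S \<in> subgraphs planted. \<exists>F\<in>\<F>. graph_iso F S}"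
    then obtain F where S: "S \<in> subgraphs planted" "F \<in> \<F>" "graph_iso F S" by blast
    have "is_graph S" using S(1) unfolding subgraphs_def by simp
    have "connected_graph F" using connected S(2) by blast
    then have "is_graph F" unfolding connected_graph_def by simp
    have "connected_graph S" by (rule graph_iso_connected) fact+
    have "S \<notin> subgraphs G"
      using free S(2,3) fam_count_eq_0_iff[OF is_graph_finite_vertices[OF graph_G]] by blast
    then obtain i where i: "i < k" "fst S \<subseteq> fst (block i)" "snd S \<subseteq> snd (block i)"
      using connected_subgraph_planted[OF S(1) \<open>connected_graph S\<close>] by blast
    have block_graph: "is_graph (block i)" by (rule is_graph_block[OF i(1)])
    have card_vertices: "card (fst (block i)) = card (fst F0)" "card (fst S) = card (fst F)"
      using graph_iso_card_vertices[OF block_iso[OF i(1)]] graph_iso_card_vertices[OF S(3)] by auto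
    then have "fst S = fst (block i)"
      using card_seteq[OF is_graph_finite_vertices[OF block_graph] i(2)] least_order S(2) by simp
    then have "card (fst F) = card (fst F0)" using card_vertices by simp
    then have "card (snd (block i)) \<le> card (snd S)"
      using least_size S(2) graph_iso_card_edges[OF graph_F0 block_graph block_iso[OF i(1)]]
        graph_iso_card_edges[OF \<open>is_graph F\<close> \<open>is_graph S\<close> S(3)] by simp
    then have "snd S = snd (block i)"
      using card_seteq[OF is_graph_finite_edges[OF block_graph] i(3)] by simp
    then have "S = block i" using \<open>fst S = fst (block i)\<close> by (simp add: prod_eq_iff)
    then show "S \<in> block ` {..<k}" using i(1) by simp
  next
    fix S assume "S \<in> block ` {..<k}"
    then show "S \<in> {S \<in> subgraphs planted. \<exists>F\<in>\<F>. graph_iso F S}"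
      using block_subgraph block_iso \<open>F0 \<in> \<F>\<close> by auto
  qed
  moreover have "fst F0 \<noteq> {}"
    using connected \<open>F0 \<in> \<F>\<close> unfolding connected_graph_def by simp
  ultimately show ?thesis unfolding fam_count_def by (simp add: card_image inj_on_block)
qed

end

lemma exa_le_ex_add:
  assumes connected: "\<forall>F\<in>\<F>. connected_graph F" and "n > 0"
    and "\<exists>H\<in>graphs_on n. fam_count \<F> H = k" and "\<exists>H\<in>graphs_on n. fam_count \<F> H = 0"
  shows "exa k n \<F> \<le> ex n \<F> + k"
proof -
  obtain H0 where H0: "H0 \<in> graphs_on n" "fam_count \<F> H0 = 0" using assms(4) by blast
  then have "is_graph H0" "fst H0 \<noteq> {}" using \<open>n > 0\<close> unfolding graphs_on_def by auto
  then have members: "\<forall>F\<in>\<F>. is_graph F \<and> snd F \<noteq> {}"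
    using connected connected_member_has_edge H0(2) unfolding connected_graph_def by blast
  obtain H where H: "H \<in> graphs_on n" "fam_count \<F> H = k" "card (snd H) = exa k n \<F>"
    using exa_attained[OF assms(3)] by blast
  then have "is_graph H" unfolding graphs_on_def by simp
  then obtain H' where H': "fst H' = fst H" "is_graph H'" "fam_count \<F> H' = 0"
    and edges: "card (snd H) \<le> card (snd H') + k"
    using delete_edge_from_each_copy[OF _ members] H(2) by blast
  have "H' \<in> graphs_on n" using H' H(1) unfolding graphs_on_def by simp
  then have "card (snd H') \<le> ex n \<F>"
    using card_edges_le_exa H'(3) ex_eq_exa_0 by metis
  then show ?thesis using edges H(3) by linarith
qed

lemma obtain_least_member:
  assumes "\<F> \<noteq> {}"
  obtains F0 where "F0 \<in> \<F>" "card (fst F0) = min_order \<F>"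
    "\<forall>F\<in>\<F>. card (fst F) = min_order \<F> \<longrightarrow> card (snd F0) \<le> card (snd F)"
proof -
  obtain F1 where "F1 \<in> \<F>" "card (fst F1) = min_order \<F>"
    using min_order_attained[OF assms] by blast
  then have "\<exists>F0. (F0 \<in> \<F> \<and> card (fst F0) = min_order \<F>)
      \<and> (\<forall>F. F \<in> \<F> \<and> card (fst F) = min_order \<F> \<longrightarrow> card (snd F0) \<le> card (snd F))"
    by (intro ex_has_least_nat[where m="\<lambda>F. card (snd F)" and k=F1]) simp
  then show ?thesis using that by blast
qed

lemma exists_graph_with_planted_copies:
  assumes connected: "\<forall>F\<in>\<F>. connected_graph F" and F0: "F0 \<in> \<F>"
    and least_order: "\<forall>F\<in>\<F>. card (fst F0) \<le> card (fst F)"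
    and least_size: "\<forall>F\<in>\<F>. card (fst F) = card (fst F0) \<longrightarrow> card (snd F0) \<le> card (snd F)"
    and G: "G \<in> graphs_on n" "fam_count \<F> G = 0"
    and X: "X \<subseteq> {0..<n}" "card X = k * card (fst F0)"
  shows "\<exists>H\<in>graphs_on n. fam_count \<F> H = k
    \<and> card (snd G) \<le> card (snd H) + card {e \<in> snd G. e \<inter> X \<noteq> {}}"
proof -
  have graph_G: "is_graph G" and vertices_G: "fst G = {0..<n}"
    using G(1) unfolding graphs_on_def by auto
  have "is_graph F0" using connected F0 unfolding connected_graph_def by simp
  have "card ({..<k} \<times> fst F0) = card X"
    using X(2) by (simp add: card_cartesian_product)
  then obtain h where h: "bij_betw h ({..<k} \<times> fst F0) X"
    using finite_same_card_bij is_graph_finite_vertices[OF \<open>is_graph F0\<close>] X(1)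
    by (metis finite_SigmaI finite_atLeastLessThan finite_lessThan finite_subset)
  interpret planting G F0 k h
    using graph_G \<open>is_graph F0\<close> h X(1) vertices_G
    by unfold_locales (auto simp: bij_betw_def)
  have "covered = X" using h unfolding covered_def bij_betw_def by simp
  have "planted \<in> graphs_on n"
    using is_graph_planted vertices_G unfolding graphs_on_def planted_def by simp
  moreover have "fam_count \<F> planted = k"
    by (rule fam_count_planted[OF connected F0 least_order least_size G(2)])
  moreover have "card (snd G) \<le> card (snd planted) + card {e \<in> snd G. e \<inter> X \<noteq> {}}"
    using card_edges_planted \<open>covered = X\<close> by simp
  ultimately show ?thesis by blast
qed

lemma mult_ex_le_mult_exa_add:
  assumes connected: "\<forall>F\<in>\<F>. connected_graph F" and "\<F> \<noteq> {}"
    and "k * min_order \<F> \<le> n" and "\<exists>H\<in>graphs_on n. fam_count \<F> H = 0"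
  shows "n * ex n \<F> \<le> n * exa k n \<F> + 2 * k * min_order \<F> * ex n \<F>"
proof -
  define v where "v = min_order \<F>"
  obtain G where G: "G \<in> graphs_on n" "fam_count \<F> G = 0" "card (snd G) = ex n \<F>"
    using exa_attained[OF assms(4)] ex_eq_exa_0 by metis
  then have graph_G: "is_graph G" and vertices_G: "fst G = {0..<n}"
    unfolding graphs_on_def by auto
  obtain F0 where F0: "F0 \<in> \<F>" "card (fst F0) = v"
    and least_size: "\<forall>F\<in>\<F>. card (fst F) = v \<longrightarrow> card (snd F0) \<le> card (snd F)"
    using obtain_least_member[OF assms(2)] unfolding v_def by blast
  obtain X where X: "X \<subseteq> {0..<n}" "card X = k * v"
    and incident: "n * card {e \<in> snd G. e \<inter> X \<noteq> {}} \<le> k * v * (2 * card (snd G))"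
    using exists_subset_few_incident_edges[of "{0..<n}" "snd G" "k * v"] assms(3)
      is_graph_edge_subset[OF graph_G] is_graph_card_edge[OF graph_G]
    unfolding vertices_G v_def by auto
  have least_order: "\<forall>F\<in>\<F>. card (fst F0) \<le> card (fst F)"
    using F0(2) min_order_le unfolding v_def by auto
  obtain H where H: "H \<in> graphs_on n" "fam_count \<F> H = k"
    and edges: "card (snd G) \<le> card (snd H) + card {e \<in> snd G. e \<inter> X \<noteq> {}}"
    using exists_graph_with_planted_copies[OF connected F0(1) least_order _ G(1,2) X(1) X(2)[folded F0(2)]]
      least_size F0(2) by auto
  have "ex n \<F> \<le> exa k n \<F> + card {e \<in> snd G. e \<inter> X \<noteq> {}}"
    using edges card_edges_le_exa[OF H] G(3) by linarith
  then have "n * ex n \<F> \<le> n * exa k n \<F> + n * card {e \<in> snd G. e \<inter> X \<noteq> {}}"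
    by (metis add_mult_distrib2 mult_le_mono2)
  then show ?thesis using incident G(3) unfolding v_def by (simp add: algebra_simps)
qed

lemma exa_lower_bound:
  assumes "\<forall>F\<in>\<F>. connected_graph F" "\<F> \<noteq> {}" "n > 0"
    and "\<exists>H\<in>graphs_on n. fam_count \<F> H = 0"
  shows "(1 - 2 * real k * real (min_order \<F>) / real n) * real (ex n \<F>) \<le> real (exa k n \<F>)"
proof (cases "n \<le> 2 * k * min_order \<F>")
  case True
  then have "real n \<le> real (2 * k * min_order \<F>)" by (simp only: of_nat_le_iff)
  then have "1 - 2 * real k * real (min_order \<F>) / real n \<le> 0"
    using \<open>n > 0\<close> by (simp add: field_simps)
  then have "(1 - 2 * real k * real (min_order \<F>) / real n) * real (ex n \<F>) \<le> 0"
    by (simp add: mult_nonpos_nonneg)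
  then show ?thesis by linarith
next
  case False
  then have "k * min_order \<F> \<le> n" by (simp add: mult.assoc)
  then have "n * ex n \<F> \<le> n * exa k n \<F> + 2 * k * min_order \<F> * ex n \<F>"
    by (rule mult_ex_le_mult_exa_add[OF assms(1,2) _ assms(4)])
  then have "real (n * ex n \<F>) \<le> real (n * exa k n \<F> + 2 * k * min_order \<F> * ex n \<F>)"
    by (simp only: of_nat_le_iff)
  then show ?thesis using \<open>n > 0\<close> by (simp add: field_simps)
qed

theorem proposition2p1:
  fixes \<F> :: "'b graph set" and n k :: nat
  assumes "\<F> \<noteq> {}"
    and "\<forall>F\<in>\<F>. connected_graph F"
    and "n > 0"
    and "\<exists>H\<in>graphs_on n. fam_count \<F> H = k"
    and "\<exists>H\<in>graphs_on n. fam_count \<F> H = 0"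
  shows "(1 - 2 * real k * real (min_order \<F>) / real n) * real (ex n \<F>) \<le> real (exa k n \<F>)
    \<and> exa k n \<F> \<le> ex n \<F> + k
    \<and> ex n \<F> + k = exa 0 n \<F> + k"
  using exa_lower_bound[OF assms(2,1,3,5)] exa_le_ex_add[OF assms(2,3,4,5)] ex_eq_exa_0
  by simp

end
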